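(* Let $m\in\mathbb Z$. Define $F=(f_{n,k})_{n,k\in\mathbb Z}$ by \[ f_{n,k}=x^ky^{-m-k-1}\,\binom{m+n}{n-k}_w\,y^{m+k+1}x^{-k}\prod_{i=1}^{n-k}W(i+k,-m-k-1)\quad(k\le n),\qquad f_{n,k}=0\ (k>n), \] and $G=(g_{k,l})_{k,l\in\mathbb Z}$ by $g_{k,l}=x^l\binom{-m-l-1}{k-l}_wx^{-l}$ for $l\le k$ and $g_{k,l}=0$ for $l>k$. Then $G$ is the inverse of $F$, i.e. $\sum_{k=l}^nf_{n,k}g_{k,l}=\delta_{n,l}$ for all $n,l\in\mathbb Z$ (the sum being $0$ when $n<l$).
   Context: Let $(w(s,t))_{s,t\in\mathbb Z}$ be commuting invertible variables and $\mathbb C_w[x,x^{-1},y,y^{-1}]$ the associative unital $\mathbb C$-algebra generated by $x^{\pm1},y^{\pm1}$ and the $w(s,t)^{\pm1}$ subject to $x^{-1}x=xx^{-1}=1$, $y^{-1}y=yy^{-1}=1$, $yx=w(1,1)xy$, $x\,w(s,t)=w(s+1,t)x$, $y\,w(s,t)=w(s,t+1)y$; thus conjugating an expression in the weights by monomials in $x,y$ shifts the weights, and $f_{n,k},g_{k,l}$ lie in $\mathbb C[(w(s,t))_{s,t\in\mathbb Z}]$. Product convention: $\prod_{j=l}^mA_j=A_l\cdots A_m$ if $m>l-1$, $1$ if $m=l-1$, $A_{l-1}^{-1}\cdots A_{m+1}^{-1}$ if $m<l-1$. $W(s,t)=\prod_{j=1}^tw(s,j)$. $\binom nk_w$ ($n,k\in\mathbb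 Z$) is the unique family with $\binom n0_w=\binom nn_w=1$ for all $n$ and $\binom{n+1}k_w=\binom nk_w+\binom n{k-1}_wW(k,n+1-k)$ whenever $(n+1,k)\ne(0,0)$. *)

theory Defs
  imports Main
begin

text \<open>Weights are modelled as a function w :: int => int => 'a into an arbitrary field,
  with all w s t nonzero (invertible). The paper's weights are free commuting invertible
  variables; an identity among them holds iff it holds for every such assignment.\<close>

definition prodc :: "(int \<Rightarrow> 'a::field) \<Rightarrow> int \<Rightarrow> int \<Rightarrow> 'a" where
  "prodc A l m = (if m \<ge> l - 1 then (\<Prod>j\<in>{l..m}. A j)
                  else (\<Prod>j\<in>{m+1..l-1}. inverse (A j)))"

definition Wf :: "(int \<Rightarrow> int \<Rightarrow> 'a::field) \<Rightarrow> int \<Rightarrow> int \<Rightarrow> 'a" where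
  "Wf w s t = prodc (\<lambda>j. w s j) 1 t"

definition wbinom :: "(int \<Rightarrow> int \<Rightarrow> 'a::field) \<Rightarrow> int \<Rightarrow> int \<Rightarrow> 'a" where
  "wbinom w = (THE B. (\<forall>n. B n 0 = 1) \<and> (\<forall>n. B n n = 1) \<and>
      (\<forall>n k. (n + 1, k) \<noteq> (0, 0) \<longrightarrow> B (n + 1) k = B n k + B n (k - 1) * Wf w k (n + 1 - k)))"

text \<open>Conjugation x^a y^b E y^(-b) x^(-a) of an expression E in the weights replaces
  w(s,t) by w(s+a,t+b).\<close>
definition shiftw :: "int \<Rightarrow> int \<Rightarrow> (int \<Rightarrow> int \<Rightarrow> 'a) \<Rightarrow> int \<Rightarrow> int \<Rightarrow> 'a" where
  "shiftw a b w = (\<lambda>s t. w (s + a) (t + b))"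

definition fmat :: "(int \<Rightarrow> int \<Rightarrow> 'a::field) \<Rightarrow> int \<Rightarrow> int \<Rightarrow> int \<Rightarrow> 'a" where
  "fmat w m n k = (if k \<le> n then
      wbinom (shiftw k (- m - k - 1) w) (m + n) (n - k)
        * prodc (\<lambda>i. Wf w (i + k) (- m - k - 1)) 1 (n - k)
    else 0)"

definition gmat :: "(int \<Rightarrow> int \<Rightarrow> 'a::field) \<Rightarrow> int \<Rightarrow> int \<Rightarrow> int \<Rightarrow> 'a" where
  "gmat w m k l = (if l \<le> k then wbinom (shiftw l 0 w) (- m - l - 1) (k - l) else 0)"

end

theory Submission
  imports Defs
begin

text \<open>After shifting the weights by \<open>(l, 0)\<close>, the entry \<open>(F G) n l\<close> becomes a \<open>w\<close>-analogue of the
  Vandermonde convolution \<open>\<Sum>i. binom a i * binom' b (r - i) = binom (a + b) r\<close> with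
  \<open>a = -m-l-1\<close>, \<open>b = m+n\<close>, \<open>r = n-l\<close>. Since \<open>a + b = r - 1\<close>, the result is
  \<open>binom (r - 1) r\<close>, which is \<open>1\<close> for \<open>r = 0\<close> and \<open>0\<close> for \<open>r > 0\<close>. The convolution identity holds
  because, as functions of \<open>a + b\<close>, both sides satisfy the \<open>w\<close>-Pascal recursion and agree at \<open>b = 0\<close>.
  As \<open>wbinom\<close> is defined by a description, a family with the defining properties has to be
  constructed, and shown to be unique, first.\<close>

lemma prodc_empty: "prodc A l (l - 1) = 1"
  by (simp add: prodc_def)

lemma prodc_nonzero: "(\<And>j. A j \<noteq> 0) \<Longrightarrow> prodc A l m \<noteq> 0"
  by (simp add: prodc_def)

lemma prodc_last:
  assumes "\<And>j. A j \<noteq> 0"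
  shows "prodc A l m = prodc A l (m - 1) * A m"
proof -
  consider "l \<le> m" | "m = l - 1" | "m < l - 1" by linarith
  then show ?thesis
  proof cases
    case 1
    then have "{l..m} = insert m {l..m - 1}" by auto
    with 1 show ?thesis by (simp add: prodc_def mult.commute)
  next
    case 2
    then show ?thesis using assms by (simp add: prodc_def)
  next
    case 3
    then have "{m..l - 1} = insert m {m + 1..l - 1}" by auto
    with 3 show ?thesis using assms by (simp add: prodc_def)
  qed
qed

lemma prodc_split:
  assumes nz: "\<And>j. A j \<noteq> 0"
  shows "prodc A l m * prodc A (m + 1) p = prodc A l p"
proof (induction p rule: int_induct[where k = m])
  case base
  show ?case using prodc_empty[of A "m + 1"] by simp
next
  case (step1 p)
  then show ?case using prodc_last[of A l "p + 1"] prodc_last[of A "m + 1" "p + 1"] nz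
    by (simp add: mult.assoc)
next
  case (step2 p)
  then have "prodc A l m * prodc A (m + 1) (p - 1) * A p = prodc A l (p - 1) * A p"
    using prodc_last[of A l p] prodc_last[of A "m + 1" p] nz by (simp add: mult.assoc)
  then show ?case using nz[of p] by simp
qed

lemma prodc_reindex: "prodc (\<lambda>j. A (j + b)) l m = prodc A (l + b) (m + b)"
proof -
  have shift: "(\<Prod>j\<in>{p..q}. f (j + b)) = (\<Prod>j\<in>{p + b..q + b}. f j)" for f :: "int \<Rightarrow> 'a" and p q
    by (rule prod.reindex_bij_witness[of _ "\<lambda>j. j - b" "\<lambda>j. j + b"]) auto
  show ?thesis
    using shift[of A l m] shift[of "\<lambda>j. inverse (A j)" "m + 1" "l - 1"]
    by (simp add: prodc_def algebra_simps)
qed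

lemma Wf_0 [simp]: "Wf w s 0 = 1"
  using prodc_empty[of _ 1] by (simp add: Wf_def)

lemma Wf_nonzero: "(\<And>s t. w s t \<noteq> 0) \<Longrightarrow> Wf w s t \<noteq> 0"
  by (simp add: Wf_def prodc_nonzero)

lemma Wf_shiftw:
  assumes "\<And>s t. w s t \<noteq> 0"
  shows "Wf (shiftw a b w) s t * Wf w (s + a) b = Wf w (s + a) (t + b)"
  using prodc_split[of "w (s + a)" 1 b "t + b"] prodc_reindex[of "w (s + a)" b 1 t] assms
  by (simp add: Wf_def shiftw_def mult.commute add.commute)

lemma Wf_shiftw_0: "Wf (shiftw a 0 w) s t = Wf w (s + a) t"
  by (simp add: Wf_def shiftw_def)

lemma shiftw_shiftw: "shiftw a b (shiftw c d w) = shiftw (a + c) (b + d) w"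
  by (simp add: shiftw_def fun_eq_iff algebra_simps)

lemma shiftw_nonzero: "(\<And>s t. w s t \<noteq> 0) \<Longrightarrow> shiftw a b w s t \<noteq> 0"
  by (simp add: shiftw_def)

lemma pascal_recursion_agree:
  fixes X Y :: "int \<Rightarrow> int \<Rightarrow> 'a::ring"
  assumes X_rec: "\<And>n k. 1 \<le> k \<Longrightarrow> X (n + 1) k = X n k + X n (k - 1) * c n k"
    and Y_rec: "\<And>n k. 1 \<le> k \<Longrightarrow> Y (n + 1) k = Y n k + Y n (k - 1) * c n k"
    and col0: "\<And>n. X n 0 = Y n 0"
    and anchor: "\<And>k. 1 \<le> k \<Longrightarrow> X (N k) k = Y (N k) k"
    and "0 \<le> k"
  shows "X n k = Y n k"
proof -
  have "\<forall>n. X n (int j) = Y n (int j)" for j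
  proof (induction j)
    case 0
    show ?case using col0 by simp
  next
    case (Suc j)
    define d where "d n = X n (int j + 1) - Y n (int j + 1)" for n
    have d_step: "d (n + 1) = d n" for n
      using X_rec[of "int j + 1" n] Y_rec[of "int j + 1" n] Suc.IH by (simp add: d_def)
    have "d n = d (N (int j + 1))" for n
    proof (induction n rule: int_induct[where k = "N (int j + 1)"])
      case (step2 i)
      then show ?case using d_step[of "i - 1"] by simp
    qed (simp_all add: d_step)
    then show ?case using anchor[of "int j + 1"] by (simp add: d_def add.commute)
  qed
  then show ?thesis using \<open>0 \<le> k\<close> by (metis nonneg_int_cases)
qed

definition is_wbinom :: "(int \<Rightarrow> int \<Rightarrow> 'a::field) \<Rightarrow> (int \<Rightarrow> int \<Rightarrow> 'a) \<Rightarrow> bool" where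
  "is_wbinom w B \<longleftrightarrow> (\<forall>n. B n 0 = 1) \<and> (\<forall>n. B n n = 1) \<and>
      (\<forall>n k. (n + 1, k) \<noteq> (0, 0) \<longrightarrow> B (n + 1) k = B n k + B n (k - 1) * Wf w k (n + 1 - k))"

lemma is_wbinomD:
  assumes "is_wbinom w B"
  shows "B n 0 = 1" and "B n n = 1"
    and "(n + 1, k) \<noteq> (0, 0) \<Longrightarrow> B (n + 1) k = B n k + B n (k - 1) * Wf w k (n + 1 - k)"
  using assms unfolding is_wbinom_def by blast+

lemma is_wbinom_unique:
  assumes nz: "\<And>s t. w s t \<noteq> 0" and B1: "is_wbinom w B1" and B2: "is_wbinom w B2"
  shows "B1 = B2"
proof -
  have nonneg: "B1 n k = B2 n k" if "0 \<le> k" for n k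
  proof (rule pascal_recursion_agree[where c = "\<lambda>n k. Wf w k (n + 1 - k)" and N = id])
    have rec: "B (n + 1) k = B n k + B n (k - 1) * Wf w k (n + 1 - k)"
      if "is_wbinom w B" and "1 \<le> k" for B n k
      using is_wbinomD(3)[OF that(1), of n k] that(2) by simp
    show "B1 (n + 1) k = B1 n k + B1 n (k - 1) * Wf w k (n + 1 - k)"
      and "B2 (n + 1) k = B2 n k + B2 n (k - 1) * Wf w k (n + 1 - k)" if "1 \<le> k" for n k
      using rec[OF B1 that] rec[OF B2 that] by blast+
  qed (simp_all add: that is_wbinomD(1,2)[OF B1] is_wbinomD(1,2)[OF B2])
  have neg: "\<forall>n. B1 n (- int j) = B2 n (- int j)" for j
  proof (induction j)
    case 0
    show ?case using nonneg by simp
  next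
    case (Suc j)
    show ?case
    proof
      fix n
      show "B1 n (- int (Suc j)) = B2 n (- int (Suc j))"
      proof (cases "(n + 1, - int j) = (0, 0)")
        case True
        then have "n = - int (Suc j)" by simp
        then show ?thesis using is_wbinomD(2)[OF B1] is_wbinomD(2)[OF B2] by simp
      next
        case False
        have rec: "B (n + 1) (- int j) = B n (- int j) + B n (- int j - 1) * Wf w (- int j) (n + 1 + int j)"
          if "is_wbinom w B" for B
          using is_wbinomD(3)[OF that False] by simp
        have "B1 n (- int j - 1) * Wf w (- int j) (n + 1 + int j)
            = B2 n (- int j - 1) * Wf w (- int j) (n + 1 + int j)"
          using rec[OF B1] rec[OF B2] Suc.IH by (metis add_left_cancel)
        then have "B1 n (- int j - 1) = B2 n (- int j - 1)"
          using Wf_nonzero[of w, OF nz] by simp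
        moreover have "- int (Suc j) = - int j - 1" by simp
        ultimately show ?thesis by metis
      qed
    qed
  qed
  have "B1 n k = B2 n k" for n k
    using nonneg neg[of "nat (- k)"] by (cases "0 \<le> k") simp_all
  then show ?thesis by blast
qed

definition indef_sum :: "(int \<Rightarrow> 'a::ab_group_add) \<Rightarrow> int \<Rightarrow> int \<Rightarrow> 'a" where
  "indef_sum g a n = (if a \<le> n then (\<Sum>j\<in>{a..<n}. g j) else - (\<Sum>j\<in>{n..<a}. g j))"

lemma indef_sum_self [simp]: "indef_sum g a a = 0"
  by (simp add: indef_sum_def)

lemma indef_sum_step: "indef_sum g a (n + 1) = indef_sum g a n + g n"
proof -
  consider "a \<le> n" | "n + 1 = a" | "n + 1 < a" by linarith
  then show ?thesis
  proof cases
    case 1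
    then have "{a..<n + 1} = insert n {a..<n}" by auto
    with 1 show ?thesis by (simp add: indef_sum_def add.commute)
  next
    case 2
    then have "{n..<a} = {n}" by auto
    with 2 show ?thesis by (simp add: indef_sum_def)
  next
    case 3
    then have "{n..<a} = insert n {n + 1..<a}" by auto
    with 3 show ?thesis by (simp add: indef_sum_def)
  qed
qed

text \<open>Column \<open>k + 1\<close> is the indefinite sum of the increments
  prescribed by the recursion, normalised by \<open>B (k + 1) (k + 1) = 1\<close>; column \<open>k - 1\<close> is obtained by
  solving the recursion for \<open>B n (k - 1)\<close>, except at \<open>(n, k) = (-1, 0)\<close>, where the recursion is exempt
  and the diagonal condition forces \<open>B (-1) (-1) = 1\<close>.\<close>

primrec wbinom_col_nonneg :: "(int \<Rightarrow> int \<Rightarrow> 'a::field) \<Rightarrow> nat \<Rightarrow> int \<Rightarrow> 'a" where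
  "wbinom_col_nonneg w 0 n = 1"
| "wbinom_col_nonneg w (Suc k) n =
     1 + indef_sum (\<lambda>i. wbinom_col_nonneg w k i * Wf w (int k + 1) (i - int k)) (int k + 1) n"

primrec wbinom_col_neg :: "(int \<Rightarrow> int \<Rightarrow> 'a::field) \<Rightarrow> nat \<Rightarrow> int \<Rightarrow> 'a" where
  "wbinom_col_neg w 0 n = 1"
| "wbinom_col_neg w (Suc j) n =
     (if j = 0 \<and> n = -1 then 1
      else (wbinom_col_neg w j (n + 1) - wbinom_col_neg w j n) / Wf w (- int j) (n + 1 + int j))"

definition wbinom_family :: "(int \<Rightarrow> int \<Rightarrow> 'a::field) \<Rightarrow> int \<Rightarrow> int \<Rightarrow> 'a" where
  "wbinom_family w n k =
     (if 0 \<le> k then wbinom_col_nonneg w (nat k) n else wbinom_col_neg w (nat (- k)) n)"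

lemma wbinom_family_nonpos: "k \<le> 0 \<Longrightarrow> wbinom_family w n k = wbinom_col_neg w (nat (- k)) n"
  by (cases "k = 0") (auto simp: wbinom_family_def)

lemma wbinom_col_neg_below_diag:
  "n \<le> - int j - 1 \<Longrightarrow> wbinom_col_neg w (Suc j) n = (if n = - int j - 1 then 1 else 0)"
proof (induction j arbitrary: n)
  case 0
  then show ?case by simp
next
  case (Suc j)
  have "wbinom_col_neg w (Suc j) (n + 1) = (if n = - int j - 2 then 1 else 0)"
    and "wbinom_col_neg w (Suc j) n = 0"
    using Suc.IH[of "n + 1"] Suc.IH[of n] Suc.prems by auto
  moreover have "n = - int j - 2 \<Longrightarrow> n + 1 + int (Suc j) = 0" by simp
  ultimately show ?case
    using Suc.prems wbinom_col_neg.simps(2)[of w "Suc j" n] by (simp del: wbinom_col_neg.simps(2))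
qed

lemma is_wbinom_wbinom_family:
  assumes nz: "\<And>s t. w s t \<noteq> 0"
  shows "is_wbinom w (wbinom_family w)"
  unfolding is_wbinom_def
proof (intro conjI allI impI)
  show "wbinom_family w n 0 = 1" for n
    by (simp add: wbinom_family_def)
next
  fix n :: int
  consider "n = 0" | j where "n = int j + 1" | j where "n = - int j - 1"
  proof -
    have "n = 0 \<or> n = int (nat (n - 1)) + 1 \<or> n = - int (nat (- n - 1)) - 1" by arith
    then show thesis using that by blast
  qed
  then show "wbinom_family w n n = 1"
  proof cases
    case 1
    then show ?thesis by (simp add: wbinom_family_def)
  next
    case 2
    then have "nat n = Suc j" by simp
    with 2 show ?thesis by (simp add: wbinom_family_def)
  next
    case 3
    then have "nat (- n) = Suc j" by simp
    with 3 show ?thesis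
      using wbinom_col_neg_below_diag[where n = n and j = j and w = w]
      by (simp add: wbinom_family_def del: wbinom_col_neg.simps)
  qed
next
  fix n k :: int
  assume exempt: "(n + 1, k) \<noteq> (0, 0)"
  show "wbinom_family w (n + 1) k
      = wbinom_family w n k + wbinom_family w n (k - 1) * Wf w k (n + 1 - k)"
  proof (cases "1 \<le> k")
    case True
    define j where "j = nat (k - 1)"
    have j: "k = int j + 1" "nat k = Suc j" "nat (k - 1) = j" using True by (auto simp: j_def)
    then show ?thesis using True by (simp add: wbinom_family_def indef_sum_step)
  next
    case False
    define j where "j = nat (- k)"
    have j: "k = - int j" "nat (- (k - 1)) = Suc j" using False by (auto simp: j_def)
    have "wbinom_family w n (k - 1) = wbinom_col_neg w (Suc j) n"
      using False j(2) by (simp add: wbinom_family_nonpos del: wbinom_col_neg.simps)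
    also have "\<dots> = (wbinom_col_neg w j (n + 1) - wbinom_col_neg w j n) / Wf w k (n + 1 - k)"
      using exempt j(1) by auto
    also have "\<dots> = (wbinom_family w (n + 1) k - wbinom_family w n k) / Wf w k (n + 1 - k)"
      using False j by (simp add: wbinom_family_nonpos)
    finally show ?thesis using Wf_nonzero[of w k "n + 1 - k"] nz by (simp add: field_simps)
  qed
qed

lemma is_wbinom_wbinom:
  assumes nz: "\<And>s t. w s t \<noteq> 0"
  shows "is_wbinom w (wbinom w)"
proof -
  have "\<exists>!B. is_wbinom w B"
    using is_wbinom_wbinom_family[of w, OF nz] is_wbinom_unique[of w, OF nz] by blast
  then have "is_wbinom w (THE B. is_wbinom w B)" by (rule theI')
  then show ?thesis by (simp add: wbinom_def is_wbinom_def)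
qed

context
  fixes w :: "int \<Rightarrow> int \<Rightarrow> 'a::field"
  assumes nz: "\<And>s t. w s t \<noteq> 0"
begin

lemma wbinom_0_right [simp]: "wbinom w n 0 = 1"
  using is_wbinomD(1)[OF is_wbinom_wbinom[of w, OF nz]] .

lemma wbinom_diag [simp]: "wbinom w n n = 1"
  using is_wbinomD(2)[OF is_wbinom_wbinom[of w, OF nz]] .

lemma wbinom_rec:
  "(n + 1, k) \<noteq> (0, 0) \<Longrightarrow> wbinom w (n + 1) k = wbinom w n k + wbinom w n (k - 1) * Wf w k (n + 1 - k)"
  using is_wbinomD(3)[OF is_wbinom_wbinom[of w, OF nz]] .

lemma wbinom_above:
  assumes "0 \<le> n" and "n < k"
  shows "wbinom w n k = 0"
proof -
  have "\<forall>n \<ge> 0. wbinom w n (n + int d + 1) = 0" for d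
  proof (induction d)
    case 0
    show ?case
    proof (intro allI impI)
      fix n :: int
      assume "0 \<le> n"
      then have "wbinom w (n + 1) (n + 1) = wbinom w n (n + 1) + wbinom w n n * Wf w (n + 1) 0"
        using wbinom_rec[of n "n + 1"] by simp
      then show "wbinom w n (n + int 0 + 1) = 0" by simp
    qed
  next
    case (Suc d)
    show ?case
    proof (intro allI impI)
      fix n :: int
      assume "0 \<le> n"
      let ?k = "n + int (Suc d) + 1"
      have "wbinom w (n + 1) ?k = wbinom w n ?k + wbinom w n (?k - 1) * Wf w ?k (n + 1 - ?k)"
        using wbinom_rec[of n ?k] \<open>0 \<le> n\<close> by simp
      moreover have "wbinom w (n + 1) ?k = 0"
        using Suc.IH[rule_format, of "n + 1"] \<open>0 \<le> n\<close> by (simp add: add.assoc)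
      moreover have "wbinom w n (?k - 1) = 0"
        using Suc.IH \<open>0 \<le> n\<close> by (simp add: add.commute)
      ultimately show "wbinom w n ?k = 0" by simp
    qed
  qed
  then have "wbinom w n (n + int (nat (k - n - 1)) + 1) = 0"
    using assms(1) by blast
  moreover have "n + int (nat (k - n - 1)) + 1 = k"
    using assms(2) by simp
  ultimately show ?thesis by simp
qed

lemma wbinom_pred_self: "0 \<le> r \<Longrightarrow> wbinom w (r - 1) r = (if r = 0 then 1 else 0)"
  using wbinom_above[of "r - 1" r] by simp

end

definition wbinom_conv_term :: "(int \<Rightarrow> int \<Rightarrow> 'a::field) \<Rightarrow> int \<Rightarrow> int \<Rightarrow> int \<Rightarrow> int \<Rightarrow> 'a" where
  "wbinom_conv_term w a b r i = wbinom w a i * wbinom (shiftw i (a - i) w) b (r - i)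
     * (\<Prod>p\<in>{1..r - i}. Wf w (p + i) (a - i))"

definition wbinom_conv :: "(int \<Rightarrow> int \<Rightarrow> 'a::field) \<Rightarrow> int \<Rightarrow> int \<Rightarrow> int \<Rightarrow> 'a" where
  "wbinom_conv w a b r = (\<Sum>i\<in>{0..r}. wbinom_conv_term w a b r i)"

context
  fixes w :: "int \<Rightarrow> int \<Rightarrow> 'a::field"
  assumes nz: "\<And>s t. w s t \<noteq> 0"
begin

lemma wbinom_conv_term_rec:
  assumes "0 \<le> i" and "i < r"
  shows "wbinom_conv_term w a (b + 1) r i
    = wbinom_conv_term w a b r i + wbinom_conv_term w a b (r - 1) i * Wf w r (a + b + 1 - r)"
proof -
  define j where "j = r - i"
  define w' where "w' = shiftw i (a - i) w"
  define P where "P = (\<Prod>p\<in>{1..j - 1}. Wf w (p + i) (a - i))"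
  have "1 \<le> j" using assms by (simp add: j_def)
  then have binom: "wbinom w' (b + 1) j = wbinom w' b j + wbinom w' b (j - 1) * Wf w' j (b + 1 - j)"
    using wbinom_rec[of w' b j] shiftw_nonzero[of w, OF nz] by (simp add: w'_def)
  have "{1..j} = insert j {1..j - 1}" using \<open>1 \<le> j\<close> by auto
  then have prod: "(\<Prod>p\<in>{1..j}. Wf w (p + i) (a - i)) = P * Wf w (j + i) (a - i)"
    by (simp add: P_def mult.commute)
  have weight: "Wf w' j (b + 1 - j) * Wf w (j + i) (a - i) = Wf w r (a + b + 1 - r)"
    using Wf_shiftw[of w i "a - i" j "b + 1 - j", OF nz] by (simp add: w'_def j_def algebra_simps)
  have expand: "wbinom_conv_term w a c r i = wbinom w a i * wbinom w' c j * (P * Wf w (j + i) (a - i))"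
    for c by (simp add: wbinom_conv_term_def prod flip: w'_def j_def)
  have "r - 1 - i = j - 1" by (simp add: j_def)
  then have expand_pred: "wbinom_conv_term w a b (r - 1) i = wbinom w a i * wbinom w' b (j - 1) * P"
    unfolding wbinom_conv_term_def P_def w'_def by (simp only: \<open>r - 1 - i = j - 1\<close>)
  have "wbinom_conv_term w a (b + 1) r i
      = wbinom w a i * wbinom w' (b + 1) j * (P * Wf w (j + i) (a - i))"
    by (rule expand)
  also have "\<dots> = wbinom w a i * wbinom w' b j * (P * Wf w (j + i) (a - i))
      + wbinom w a i * wbinom w' b (j - 1) * P * (Wf w' j (b + 1 - j) * Wf w (j + i) (a - i))"
    unfolding binom by (simp add: algebra_simps)
  also have "\<dots> = wbinom_conv_term w a b r i + wbinom_conv_term w a b (r - 1) i * Wf w r (a + b + 1 - r)"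
    unfolding expand expand_pred weight by (simp add: algebra_simps)
  finally show ?thesis .
qed

lemma wbinom_conv_split_last:
  "0 \<le> r \<Longrightarrow> wbinom_conv w a b r = (\<Sum>i\<in>{0..r - 1}. wbinom_conv_term w a b r i) + wbinom_conv_term w a b r r"
proof -
  assume "0 \<le> r"
  then have "{0..r} = insert r {0..r - 1}" by auto
  then show ?thesis by (simp add: wbinom_conv_def add.commute)
qed

lemma wbinom_conv_term_diag: "wbinom_conv_term w a b r r = wbinom w a r"
  using shiftw_nonzero[of w, OF nz] by (simp add: wbinom_conv_term_def)

lemma wbinom_conv_lower_0: "wbinom_conv w a b 0 = 1"
  using wbinom_conv_split_last[of 0 a b] nz by (simp add: wbinom_conv_term_diag)

lemma wbinom_conv_rec:
  assumes "1 \<le> r"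
  shows "wbinom_conv w a (b + 1) r = wbinom_conv w a b r + wbinom_conv w a b (r - 1) * Wf w r (a + b + 1 - r)"
proof -
  have "wbinom_conv w a (b + 1) r
      = (\<Sum>i\<in>{0..r - 1}. wbinom_conv_term w a (b + 1) r i) + wbinom_conv_term w a (b + 1) r r"
    using assms by (simp add: wbinom_conv_split_last)
  also have "\<dots> = (\<Sum>i\<in>{0..r - 1}. wbinom_conv_term w a b r i
        + wbinom_conv_term w a b (r - 1) i * Wf w r (a + b + 1 - r)) + wbinom_conv_term w a b r r"
    by (simp add: wbinom_conv_term_rec wbinom_conv_term_diag)
  also have "\<dots> = wbinom_conv w a b r + wbinom_conv w a b (r - 1) * Wf w r (a + b + 1 - r)"
    using assms wbinom_conv_def[of w a b "r - 1"]
    by (simp add: wbinom_conv_split_last sum.distrib sum_distrib_right)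
  finally show ?thesis .
qed

lemma wbinom_conv_upper_0:
  assumes "0 \<le> r"
  shows "wbinom_conv w a 0 r = wbinom w a r"
proof -
  have "wbinom_conv_term w a 0 r i = 0" if "i \<in> {0..r - 1}" for i
    using wbinom_above[of "shiftw i (a - i) w" 0 "r - i"] shiftw_nonzero[of w, OF nz] that
    by (simp add: wbinom_conv_term_def)
  then show ?thesis
    using assms by (simp add: wbinom_conv_split_last wbinom_conv_term_diag)
qed

lemma wbinom_vandermonde:
  assumes "0 \<le> r"
  shows "wbinom_conv w a b r = wbinom w (a + b) r"
proof -
  have "wbinom_conv w a (n - a) r = wbinom w n r" for n
  proof (rule pascal_recursion_agree[where c = "\<lambda>n r. Wf w r (n + 1 - r)" and N = "\<lambda>_. a"])
    show "wbinom_conv w a (n + 1 - a) r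
        = wbinom_conv w a (n - a) r + wbinom_conv w a (n - a) (r - 1) * Wf w r (n + 1 - r)"
      if "1 \<le> r" for n r
      using wbinom_conv_rec[OF that, of a "n - a"] by (simp add: algebra_simps)
    show "wbinom w (n + 1) r = wbinom w n r + wbinom w n (r - 1) * Wf w r (n + 1 - r)"
      if "1 \<le> r" for n r
      using wbinom_rec[of w n r] nz that by simp
  qed (simp_all add: assms nz wbinom_conv_lower_0 wbinom_conv_upper_0)
  from this[of "a + b"] show ?thesis by simp
qed

end


lemma fmat_mult_gmat:
  assumes "l \<le> k" and "k \<le> n"
  shows "fmat w m n k * gmat w m k l
    = wbinom_conv_term (shiftw l 0 w) (- m - l - 1) (m + n) (n - l) (k - l)"
proof -
  have shift: "shiftw (k - l) (- m - k - 1) (shiftw l 0 w) = shiftw k (- m - k - 1) w"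
    unfolding shiftw_shiftw by (rule arg_cong2[where f = "\<lambda>a b. shiftw a b w"]) simp_all
  have len: "n - l - (k - l) = n - k" and exponent: "- m - l - 1 - (k - l) = - m - k - 1" by simp_all
  have prod: "(\<Prod>p\<in>{1..n - k}. Wf (shiftw l 0 w) (p + (k - l)) (- m - k - 1))
      = prodc (\<lambda>i. Wf w (i + k) (- m - k - 1)) 1 (n - k)"
    using assms by (simp add: prodc_def Wf_shiftw_0)
  show ?thesis
    unfolding wbinom_conv_term_def len exponent shift prod
    using assms by (simp add: fmat_def gmat_def mult_ac)
qed

lemma sum_fmat_mult_gmat:
  assumes "l \<le> n"
  shows "(\<Sum>k\<in>{l..n}. fmat w m n k * gmat w m k l)
    = wbinom_conv (shiftw l 0 w) (- m - l - 1) (m + n) (n - l)"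
proof -
  have "(\<Sum>k\<in>{l..n}. fmat w m n k * gmat w m k l)
      = (\<Sum>i\<in>{0..n - l}. fmat w m n (i + l) * gmat w m (i + l) l)"
    by (rule sum.reindex_bij_witness[of _ "\<lambda>i. i + l" "\<lambda>k. k - l"]) auto
  also have "\<dots> = wbinom_conv (shiftw l 0 w) (- m - l - 1) (m + n) (n - l)"
    unfolding wbinom_conv_def by (rule sum.cong) (simp_all add: fmat_mult_gmat)
  finally show ?thesis .
qed

theorem theorem9:
  fixes w :: "int \<Rightarrow> int \<Rightarrow> 'a::field" and m :: int
  assumes "\<And>s t. w s t \<noteq> 0"
  shows "\<forall>n l. (\<Sum>k\<in>{l..n}. fmat w m n k * gmat w m k l) = (if n = l then 1 else 0)"
proof (intro allI)
  fix n l :: int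
  show "(\<Sum>k\<in>{l..n}. fmat w m n k * gmat w m k l) = (if n = l then 1 else 0)"
  proof (cases "l \<le> n")
    case True
    define w' where "w' = shiftw l 0 w"
    have nz': "w' s t \<noteq> 0" for s t
      using assms by (simp add: w'_def shiftw_nonzero)
    have "(\<Sum>k\<in>{l..n}. fmat w m n k * gmat w m k l) = wbinom_conv w' (- m - l - 1) (m + n) (n - l)"
      unfolding w'_def using True by (rule sum_fmat_mult_gmat)
    also have "\<dots> = wbinom w' (- m - l - 1 + (m + n)) (n - l)"
      using wbinom_vandermonde[of w' "n - l"] nz' True by simp
    also have "\<dots> = wbinom w' (n - l - 1) (n - l)"
      by (rule arg_cong[where f = "\<lambda>a. wbinom w' a (n - l)"]) simp
    also have "\<dots> = (if n = l then 1 else 0)"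
      using wbinom_pred_self[of w' "n - l"] nz' True by simp
    finally show ?thesis .
  qed simp
qed

end
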